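(* Let $T$ be a rooted binary tree with black/white-coloured leaves and the induced node colouring and classification as described in the context. Any SPR operation on $T$ belonging to the class $(\mathrm{B},\mathrm{r},\mathrm{W},\ast)$ or $(\mathrm{B},\mathrm{r},\mathrm{G},\ast)$ does not reduce the number of maximal black subtrees, i.e. the resulting tree has at least as many maximal black subtrees as $T$.
   Context: All trees are rooted binary trees; every non-leaf node has exactly two children and every non-root node $n$ has a parent $\mathrm{pa}(n)$. A "subtree" always means a node together with all of its descendants. Colouring: each leaf is coloured black (B) or white (W); an internal node is black if both children are black, white if both children are white, and grey (G) otherwise. A subtree is black (resp. white) if all its nodes are black (resp. white); it is maximal if no strictly larger subtree containing it is black (resp. white). Classification: a black or white node is of type "r" if it is the root of a maximal subtree of its own colour, and of type "b" otherwise; all grey nodes are of type "b" by convention. SPR operation $(u,v)$ on $T$: $u$ is a non-root node, $v$ is a node with $v\notin\{u,\mathrm{pa}(u)\}$ and $v$ not a descendant of $u$; the subtree rooted at $u$ is pruned (the edge to $u$ is removed and $\mathrm{pa}(u)$ deleted, its other child taking its place), then regrafted by inserting a new node on the edge from $v$ to its parent (or as a new root above $v$ if $v$ is the root) whose two children are $v$ and $u$; colours of the resulting tree are recomputed by the same rule. The operation belongs to class $(x,y,z,w)$ where $x,z\in\{\mathrm{B},\mathrm{W},\mathrm{G}\}$ are the colours in $T$ of $u$ and $v$, and $y,w\in\{\mathrm{r},\mathrm{b}\}$ their classifications in $T$; $\ast$ denotes any value. *)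

theory Defs
  imports Main "HOL-Library.Sublist"
begin

text \<open>Rooted binary trees whose leaves are coloured; Leaf True = black leaf,
Leaf False = white leaf. Nodes are addressed by positions (paths from the root):
False = go to the left child, True = go to the right child.\<close>

datatype tree = Leaf bool | Node tree tree

datatype colour = B | W | G

datatype cls = R | Bc

fun positions :: "tree \<Rightarrow> bool list set" where
  "positions (Leaf c) = {[]}"
| "positions (Node l r) = {[]} \<union> Cons False ` positions l \<union> Cons True ` positions r"

fun sub :: "tree \<Rightarrow> bool list \<Rightarrow> tree" where
  "sub t [] = t"
| "sub (Node l r) (d # p) = sub (if d then r else l) p"
| "sub (Leaf c) (d # p) = Leaf c"

fun replace :: "tree \<Rightarrow> bool list \<Rightarrow> tree \<Rightarrow> tree" where
  "replace t [] s = s"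
| "replace (Node l r) (d # p) s =
     (if d then Node l (replace r p s) else Node (replace l p s) r)"
| "replace (Leaf c) (d # p) s = Leaf c"

fun col :: "tree \<Rightarrow> colour" where
  "col (Leaf c) = (if c then B else W)"
| "col (Node l r) =
     (if col l = B \<and> col r = B then B
      else if col l = W \<and> col r = W then W else G)"

definition node_col :: "tree \<Rightarrow> bool list \<Rightarrow> colour" where
  "node_col t p = col (sub t p)"

definition mono_subtree :: "tree \<Rightarrow> colour \<Rightarrow> bool list \<Rightarrow> bool" where
  "mono_subtree t c p \<longleftrightarrow> p \<in> positions t \<and>
     (\<forall>q. p @ q \<in> positions t \<longrightarrow> node_col t (p @ q) = c)"

definition maximal_subtree :: "tree \<Rightarrow> colour \<Rightarrow> bool list \<Rightarrow> bool" where
  "maximal_subtree t c p \<longleftrightarrow> mono_subtree t c p \<and>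
     \<not> (\<exists>p'. strict_prefix p' p \<and> mono_subtree t c p')"

definition num_max_black :: "tree \<Rightarrow> nat" where
  "num_max_black t = card {p. maximal_subtree t B p}"

definition classify :: "tree \<Rightarrow> bool list \<Rightarrow> cls" where
  "classify t p = (if node_col t p \<noteq> G \<and> maximal_subtree t (node_col t p) p then R else Bc)"

text \<open>pruning the subtree at u (u non-root): pa(u) is replaced by the sibling of u\<close>
definition prune :: "tree \<Rightarrow> bool list \<Rightarrow> tree" where
  "prune t u = replace t (butlast u) (sub t (butlast u @ [\<not> last u]))"

text \<open>position in the pruned tree of a node v of t (v not in the subtree of u, v \<noteq> pa(u))\<close>
definition moved_pos :: "bool list \<Rightarrow> bool list \<Rightarrow> bool list" where
  "moved_pos u v = (if prefix (butlast u) v then butlast u @ drop (length u) v else v)"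

definition spr :: "tree \<Rightarrow> bool list \<Rightarrow> bool list \<Rightarrow> tree" where
  "spr t u v = (let t' = prune t u; v' = moved_pos u v
               in replace t' v' (Node (sub t' v') (sub t u)))"

definition valid_spr :: "tree \<Rightarrow> bool list \<Rightarrow> bool list \<Rightarrow> bool" where
  "valid_spr t u v \<longleftrightarrow> u \<in> positions t \<and> u \<noteq> [] \<and> v \<in> positions t \<and>
     v \<noteq> u \<and> v \<noteq> butlast u \<and> \<not> prefix u v"

end

theory Submission
  imports Defs
begin

text \<open>Black propagates downwards, so the maximal black subtrees are the black nodes without
black proper ancestors, and their number count_max_black is additive over non-black nodes.
Hence replacing a non-black node by a non-black subtree changes the count by the difference
of the counts of the two subtrees. Pruning the maximal black subtree at u replaces its
non-black parent by the non-black sibling of u and loses one maximal black subtree;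
regrafting it above the non-black node v replaces v by a non-black node with children v and
u and regains it. So the count is in fact unchanged.\<close>

lemma Nil_in_positions [simp]: "[] \<in> positions t"
  by (cases t) auto

lemma sub_Leaf [simp]: "sub (Leaf c) q = Leaf c"
  by (cases q) auto

lemma finite_positions: "finite (positions t)"
  by (induction t) auto

lemma sub_append: "sub t (p @ q) = sub (sub t p) q"
  by (induction t p rule: sub.induct) auto

lemma append_in_positions_iff:
  "p @ q \<in> positions t \<longleftrightarrow> p \<in> positions t \<and> q \<in> positions (sub t p)"
  by (induction t p rule: sub.induct) auto

lemma sub_replace_append:
  "p \<in> positions t \<Longrightarrow> sub (replace t p s) (p @ q) = sub s q"
  by (induction t p s rule: replace.induct) auto

lemma append_in_positions_replace_iff:
  "p \<in> positions t \<Longrightarrow> p @ q \<in> positions (replace t p s) \<longleftrightarrow> q \<in> positions s"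
  by (induction t p s rule: replace.induct) auto

lemma sub_replace_prefix:
  "q \<in> positions t \<Longrightarrow> sub (replace t (q @ r) s) q = replace (sub t q) r s"
  by (induction t q rule: sub.induct) auto

lemma in_positions_replace_prefix:
  "q \<in> positions t \<Longrightarrow> prefix q p \<Longrightarrow> q \<in> positions (replace t p s)"
  by (induction t p s arbitrary: q rule: replace.induct) (auto simp: prefix_Cons)

lemma replace_parallel:
  "\<not> prefix p q \<Longrightarrow> \<not> prefix q p \<Longrightarrow>
     sub (replace t p s) q = sub t q \<and> (q \<in> positions (replace t p s) \<longleftrightarrow> q \<in> positions t)"
  by (induction t p s arbitrary: q rule: replace.induct) (auto simp: prefix_Cons neq_Nil_conv)

lemma col_sub_black: "col t = B \<Longrightarrow> col (sub t q) = B"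
  by (induction t q rule: sub.induct) (auto split: if_splits)

lemma col_replace_not_black:
  assumes "p \<in> positions t" and "col s \<noteq> B"
  shows "col (replace t p s) \<noteq> B"
proof
  assume "col (replace t p s) = B"
  then have "col (sub (replace t p s) (p @ [])) = B"
    by (rule col_sub_black)
  with assms show False
    by (simp only: sub_replace_append) simp
qed

lemma replace_preserves_not_black:
  assumes "q \<in> positions t" and "p \<in> positions t" and "\<not> prefix p q"
    and "col (sub t q) \<noteq> B" and "col s \<noteq> B"
  shows "q \<in> positions (replace t p s) \<and> col (sub (replace t p s) q) \<noteq> B"
proof (cases "prefix q p")
  case True
  then obtain r where r: "p = q @ r"
    by (auto simp: prefix_def)
  with assms(2) have "r \<in> positions (sub t q)"
    by (simp add: append_in_positions_iff)
  then have "col (replace (sub t q) r s) \<noteq> B"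
    using assms(5) by (rule col_replace_not_black)
  moreover have "sub (replace t p s) q = replace (sub t q) r s"
    unfolding r using assms(1) by (rule sub_replace_prefix)
  ultimately show ?thesis
    using in_positions_replace_prefix[OF assms(1) True] by simp
next
  case False
  with assms(1,4) show ?thesis
    using replace_parallel[OF assms(3) False, of t s] by simp
qed

lemma mono_subtree_B_iff: "mono_subtree t B p \<longleftrightarrow> p \<in> positions t \<and> col (sub t p) = B"
  unfolding mono_subtree_def node_col_def
  by (metis append.right_neutral col_sub_black sub_append)

lemma maximal_subtree_B_iff:
  "maximal_subtree t B p \<longleftrightarrow>
     p \<in> positions t \<and> col (sub t p) = B \<and> (\<forall>p'. strict_prefix p' p \<longrightarrow> col (sub t p') \<noteq> B)"
  unfolding maximal_subtree_def mono_subtree_B_iff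
  by (metis append_in_positions_iff prefix_def strict_prefix_def)

lemma maximal_subtree_B_Node:
  assumes "col (Node l r) \<noteq> B"
  shows "maximal_subtree (Node l r) B (d # p) \<longleftrightarrow> maximal_subtree (if d then r else l) B p"
proof -
  have strict_prefix_Cons:
    "strict_prefix p' (d # p) \<longleftrightarrow> p' = [] \<or> (\<exists>p''. p' = d # p'' \<and> strict_prefix p'' p)" for p'
    by (cases p') auto
  from assms show ?thesis
    unfolding maximal_subtree_B_iff strict_prefix_Cons by auto
qed

lemma maximal_subtree_B_black: "col t = B \<Longrightarrow> maximal_subtree t B p \<longleftrightarrow> p = []"
  unfolding maximal_subtree_B_iff by (cases p) (auto intro!: exI[of _ "[]"])

fun count_max_black :: "tree \<Rightarrow> nat" where
  "count_max_black (Leaf c) = (if c then 1 else 0)"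
| "count_max_black (Node l r) =
     (if col (Node l r) = B then 1 else count_max_black l + count_max_black r)"

lemma count_max_black_black: "col t = B \<Longrightarrow> count_max_black t = 1"
  by (cases t) (auto split: if_splits)

lemma num_max_black_eq_count: "num_max_black t = count_max_black t"
  unfolding num_max_black_def
proof (induction t)
  case (Leaf c)
  have "{p. maximal_subtree (Leaf c) B p} = (if c then {[]} else {})"
    unfolding maximal_subtree_B_iff by auto
  then show ?case by simp
next
  case (Node l r)
  show ?case
  proof (cases "col (Node l r) = B")
    case True
    then show ?thesis
      by (simp add: maximal_subtree_B_black)
  next
    case False
    let ?L = "{p. maximal_subtree l B p}" and ?R = "{p. maximal_subtree r B p}"
    have root: "\<not> maximal_subtree (Node l r) B []"
      using False by (simp add: maximal_subtree_B_iff)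
    have "{p. maximal_subtree (Node l r) B p} = Cons False ` ?L \<union> Cons True ` ?R"
    proof (rule set_eqI)
      fix x
      show "x \<in> {p. maximal_subtree (Node l r) B p} \<longleftrightarrow> x \<in> Cons False ` ?L \<union> Cons True ` ?R"
        using root maximal_subtree_B_Node[OF False] by (cases x) auto
    qed
    moreover have "finite ?L" "finite ?R"
      using finite_positions by (auto intro: rev_finite_subset simp: maximal_subtree_B_iff)
    then have "card (Cons False ` ?L \<union> Cons True ` ?R) = card ?L + card ?R"
      by (subst card_Un_disjoint) (auto simp: card_image)
    ultimately show ?thesis
      using Node.IH False by simp
  qed
qed

lemma count_max_black_replace:
  assumes "p \<in> positions t" and "col (sub t p) \<noteq> B" and "col s \<noteq> B"
  shows "count_max_black (replace t p s) + count_max_black (sub t p) =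
    count_max_black t + count_max_black s"
  using assms
proof (induction t arbitrary: p)
  case (Leaf c)
  then show ?case by simp
next
  case (Node l r)
  show ?case
  proof (cases p)
    case Nil
    then show ?thesis by simp
  next
    case (Cons d p')
    have "col (Node l r) \<noteq> B"
      using Node.prems(2) col_sub_black by blast
    moreover have "col (replace (Node l r) p s) \<noteq> B"
      using col_replace_not_black Node.prems(1,3) by blast
    ultimately show ?thesis
      using Node.IH Node.prems Cons by (cases d) auto
  qed
qed

lemma count_max_black_prune:
  assumes "w @ [d] \<in> positions t" and "col (sub t (w @ [d])) = B" and "col (sub t w) \<noteq> B"
  shows "count_max_black (prune t (w @ [d])) + 1 = count_max_black t"
    and "col (sub t (w @ [\<not> d])) \<noteq> B"
proof -
  define s where "s = sub t (w @ [\<not> d])"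
  have w: "w \<in> positions t" and "[d] \<in> positions (sub t w)"
    using assms(1) unfolding append_in_positions_iff by blast+
  then obtain a b where ab: "sub t w = Node a b"
    by (cases "sub t w") auto
  have "(sub t (w @ [d]) = a \<and> s = b) \<or> (sub t (w @ [d]) = b \<and> s = a)"
    unfolding s_def sub_append ab by (cases d) simp_all
  then have s: "col s \<noteq> B" and "count_max_black (sub t w) = count_max_black s + 1"
    using assms(2,3) ab count_max_black_black[OF assms(2)] by auto
  moreover have "count_max_black (replace t w s) + count_max_black (sub t w) =
      count_max_black t + count_max_black s"
    using count_max_black_replace[OF w assms(3) s] .
  moreover have "prune t (w @ [d]) = replace t w s"
    unfolding prune_def s_def by simp
  ultimately show "count_max_black (prune t (w @ [d])) + 1 = count_max_black t"
    by simp
  from s show "col (sub t (w @ [\<not> d])) \<noteq> B"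
    unfolding s_def .
qed

lemma count_max_black_graft:
  assumes "v \<in> positions t" and "col (sub t v) \<noteq> B" and "col U = B"
  shows "count_max_black (replace t v (Node (sub t v) U)) = count_max_black t + 1"
proof -
  have N: "col (Node (sub t v) U) \<noteq> B"
    using assms(2) by simp
  then have "count_max_black (Node (sub t v) U) = count_max_black (sub t v) + 1"
    using count_max_black_black[OF assms(3)] by simp
  with count_max_black_replace[OF assms(1,2) N] show ?thesis
    by simp
qed

lemma moved_pos_not_black:
  assumes "valid_spr t (w @ [d]) v" and "col (sub t v) \<noteq> B"
    and "col (sub t (w @ [\<not> d])) \<noteq> B"
  shows "moved_pos (w @ [d]) v \<in> positions (prune t (w @ [d])) \<and>
    col (sub (prune t (w @ [d])) (moved_pos (w @ [d]) v)) \<noteq> B"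
proof -
  define s where "s = sub t (w @ [\<not> d])"
  have v: "v \<in> positions t" "v \<noteq> w" "\<not> prefix (w @ [d]) v" and "w @ [d] \<in> positions t"
    using assms(1) unfolding valid_spr_def by auto
  then have w: "w \<in> positions t"
    unfolding append_in_positions_iff by blast
  have prune: "prune t (w @ [d]) = replace t w s"
    unfolding prune_def s_def by simp
  show ?thesis
  proof (cases "prefix w v")
    case True
    then obtain r where "v = w @ r"
      by (auto simp: prefix_def)
    with v(2) obtain e r' where v_eq': "v = w @ e # r'"
      by (cases r) auto
    with v(3) have "e = (\<not> d)"
      by auto
    with v_eq' have v_eq: "v = (w @ [\<not> d]) @ r'"
      by simp
    have "moved_pos (w @ [d]) v = w @ r'"
      unfolding moved_pos_def v_eq by simp
    moreover have "r' \<in> positions s" "sub s r' = sub t v"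
      using v(1) unfolding v_eq s_def append_in_positions_iff sub_append by simp_all
    ultimately show ?thesis
      unfolding prune using w append_in_positions_replace_iff sub_replace_append assms(2) by simp
  next
    case False
    then have "moved_pos (w @ [d]) v = v"
      unfolding moved_pos_def by simp
    with replace_preserves_not_black[OF v(1) w False assms(2)] assms(3) show ?thesis
      unfolding prune s_def by simp
  qed
qed

lemma num_max_black_spr:
  assumes "valid_spr t u v" and "maximal_subtree t B u" and "col (sub t v) \<noteq> B"
  shows "num_max_black (spr t u v) = num_max_black t"
proof -
  have "u \<noteq> []"
    using assms(1) unfolding valid_spr_def by simp
  then obtain w d where u: "u = w @ [d]"
    by (cases u rule: rev_cases) auto
  have black: "w @ [d] \<in> positions t" "col (sub t (w @ [d])) = B"
    using assms(2) unfolding u maximal_subtree_B_iff by auto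
  have "strict_prefix w (w @ [d])"
    by (simp add: strict_prefix_def)
  then have parent: "col (sub t w) \<noteq> B"
    using assms(2) unfolding u maximal_subtree_B_iff by blast
  note pruned = count_max_black_prune[OF black parent]
  have "count_max_black (spr t (w @ [d]) v) = count_max_black (prune t (w @ [d])) + 1"
    unfolding spr_def Let_def
    using count_max_black_graft[OF _ _ black(2)]
      moved_pos_not_black[OF assms(1)[unfolded u] assms(3) pruned(2)]
    by blast
  with pruned(1) show ?thesis
    unfolding num_max_black_eq_count u by simp
qed

theorem lemma1:
  assumes "valid_spr t u v"
    and "node_col t u = B" and "classify t u = R"
    and "node_col t v = W \<or> node_col t v = G"
  shows "num_max_black t \<le> num_max_black (spr t u v)"
proof -
  have "maximal_subtree t B u"
    using assms(2,3) unfolding classify_def by (auto split: if_splits)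
  moreover have "col (sub t v) \<noteq> B"
    using assms(4) unfolding node_col_def by auto
  ultimately show ?thesis
    using num_max_black_spr[OF assms(1)] by simp
qed

end
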